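(* Let $G$ be a $2P_3$-free graph. Then $ct_{\gamma_{t2}}(G)\le 1$ (i.e. $G$ is a yes-instance of \textsc{1-Edge Contraction($\gamma_{t2}$)}) if and only if $G$ has a minimum semitotal dominating set that is not independent (i.e. $G$ is a no-instance of \textsc{All Independent MSD}).
   Context: All graphs are finite, simple and connected. A semitotal dominating set of $G$ is a set $D\subseteq V(G)$ such that every vertex outside $D$ has a neighbour in $D$ and every vertex of $D$ is at distance at most two from another vertex of $D$; $\gamma_{t2}(G)$ is its minimum size and a minimum semitotal dominating set is one of that size. $ct_{\gamma_{t2}}(G)$ is the smallest $k$ such that contracting some $k$ edges of $G$ (contracting $uv$ replaces $u,v$ by one vertex adjacent to all neighbours of $u$ or $v$) yields $G'$ with $\gamma_{t2}(G')<\gamma_{t2}(G)$. \textsc{All Independent MSD}: given $G$, decide whether every minimum semitotal dominating set of $G$ is independent. $2P_3$ is the disjoint union of two paths on three vertices. *)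

theory Defs
  imports Main
begin

definition graph :: "'a set \<Rightarrow> ('a \<Rightarrow> 'a \<Rightarrow> bool) \<Rightarrow> bool" where
  "graph V E \<longleftrightarrow> finite V \<and> V \<noteq> {} \<and> (\<forall>x y. E x y \<longrightarrow> x \<in> V \<and> y \<in> V)
     \<and> (\<forall>x y. E x y \<longrightarrow> E y x) \<and> (\<forall>x. \<not> E x x)"

definition connected_graph :: "'a set \<Rightarrow> ('a \<Rightarrow> 'a \<Rightarrow> bool) \<Rightarrow> bool" where
  "connected_graph V E \<longleftrightarrow> graph V E \<and> (\<forall>x\<in>V. \<forall>y\<in>V. E\<^sup>*\<^sup>* x y)"

definition within_two :: "'a set \<Rightarrow> ('a \<Rightarrow> 'a \<Rightarrow> bool) \<Rightarrow> 'a \<Rightarrow> 'a \<Rightarrow> bool" where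
  "within_two V E x y \<longleftrightarrow> x \<noteq> y \<and> (E x y \<or> (\<exists>w\<in>V. E x w \<and> E w y))"

definition semitotal_dom :: "'a set \<Rightarrow> ('a \<Rightarrow> 'a \<Rightarrow> bool) \<Rightarrow> 'a set \<Rightarrow> bool" where
  "semitotal_dom V E D \<longleftrightarrow> D \<subseteq> V
     \<and> (\<forall>x\<in>V - D. \<exists>y\<in>D. E x y)
     \<and> (\<forall>x\<in>D. \<exists>y\<in>D. within_two V E x y)"

definition gamma_t2 :: "'a set \<Rightarrow> ('a \<Rightarrow> 'a \<Rightarrow> bool) \<Rightarrow> nat" where
  "gamma_t2 V E = (LEAST k. \<exists>D. semitotal_dom V E D \<and> card D = k)"

definition min_sds :: "'a set \<Rightarrow> ('a \<Rightarrow> 'a \<Rightarrow> bool) \<Rightarrow> 'a set \<Rightarrow> bool" where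
  "min_sds V E D \<longleftrightarrow> semitotal_dom V E D \<and> card D = gamma_t2 V E"

definition independent :: "('a \<Rightarrow> 'a \<Rightarrow> bool) \<Rightarrow> 'a set \<Rightarrow> bool" where
  "independent E D \<longleftrightarrow> (\<forall>x\<in>D. \<forall>y\<in>D. \<not> E x y)"

text \<open>Contraction of the edge uv: v is merged into u (the merged vertex is named u).\<close>
definition contract_V :: "'a set \<Rightarrow> 'a \<Rightarrow> 'a \<Rightarrow> 'a set" where
  "contract_V V u v = V - {v}"

definition contract_E :: "'a set \<Rightarrow> ('a \<Rightarrow> 'a \<Rightarrow> bool) \<Rightarrow> 'a \<Rightarrow> 'a \<Rightarrow> 'a \<Rightarrow> 'a \<Rightarrow> bool" where
  "contract_E V E u v x y \<longleftrightarrow> x \<in> V - {v} \<and> y \<in> V - {v} \<and> x \<noteq> y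
     \<and> (E x y \<or> (x = u \<and> E v y) \<or> (y = u \<and> E x v))"

text \<open>ct_{gamma_t2}(G) \<le> 1: some single edge contraction decreases gamma_t2
  (contracting 0 edges never does).\<close>
definition ct_gamma_t2_le_1 :: "'a set \<Rightarrow> ('a \<Rightarrow> 'a \<Rightarrow> bool) \<Rightarrow> bool" where
  "ct_gamma_t2_le_1 V E \<longleftrightarrow> (\<exists>u\<in>V. \<exists>v\<in>V. E u v \<and>
     gamma_t2 (contract_V V u v) (contract_E V E u v) < gamma_t2 V E)"

definition induced_P3 :: "('a \<Rightarrow> 'a \<Rightarrow> bool) \<Rightarrow> 'a \<Rightarrow> 'a \<Rightarrow> 'a \<Rightarrow> bool" where
  "induced_P3 E a b c \<longleftrightarrow> distinct [a, b, c] \<and> E a b \<and> E b c \<and> \<not> E a c"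

definition free_2P3 :: "'a set \<Rightarrow> ('a \<Rightarrow> 'a \<Rightarrow> bool) \<Rightarrow> bool" where
  "free_2P3 V E \<longleftrightarrow> \<not> (\<exists>a1\<in>V. \<exists>b1\<in>V. \<exists>c1\<in>V. \<exists>a2\<in>V. \<exists>b2\<in>V. \<exists>c2\<in>V.
     distinct [a1, b1, c1, a2, b2, c2] \<and> induced_P3 E a1 b1 c1 \<and> induced_P3 E a2 b2 c2
     \<and> (\<forall>x\<in>{a1, b1, c1}. \<forall>y\<in>{a2, b2, c2}. \<not> E x y))"

end

theory Submission
  imports Defs
begin

(* Contracting an edge uv lowers gamma_t2 by at most one: a semitotal dominating set D' of the
  contracted graph lifts to G by adding v when the merged vertex u lies in D', and otherwise by
  adding the endpoint of uv adjacent to a dominator of u; either way the lifted set contains an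
  edge. Hence ct <= 1 yields a minimum semitotal dominating set that is not independent.

  Conversely, let the minimum set D contain an edge uv. If a third vertex of D is within
  distance two of u or v, then D - {v} stays semitotal dominating after contracting uv.
  Otherwise one vertex of D is exchanged for one outside D so as to create this configuration.
  If every neighbour of v other than u is adjacent to u, then v is traded for a neighbour of u
  on the boundary of N[u] \<union> N[v]. Otherwise 2P3-freeness takes over: a vertex t on an induced
  P3 whose other two vertices are outer dominators (those in D - {u, v}) is adjacent to every y
  for which y-u-v is an induced P3, so t can replace u. If there is no such t, outer dominators
  within distance two of each other are adjacent, and an outer dominator adjacent to another one
  has no private neighbour; so the partner z' of the dominator z of a boundary vertex q can be
  traded for q. *)

lemma graph_finite: "graph V E \<Longrightarrow> finite V"
  unfolding graph_def by blast

lemma graph_vertices: "graph V E \<Longrightarrow> E x y \<Longrightarrow> x \<in> V \<and> y \<in> V"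
  unfolding graph_def by blast

lemma graph_sym: "graph V E \<Longrightarrow> E x y \<Longrightarrow> E y x"
  unfolding graph_def by blast

lemma graph_irrefl: "graph V E \<Longrightarrow> E x y \<Longrightarrow> x \<noteq> y"
  unfolding graph_def by blast

lemma within_two_sym: "graph V E \<Longrightarrow> within_two V E x y \<Longrightarrow> within_two V E y x"
  unfolding within_two_def graph_def by blast

lemma within_two_if_edge: "graph V E \<Longrightarrow> E x y \<Longrightarrow> within_two V E x y"
  unfolding within_two_def graph_def by blast

lemma rtranclp_boundary_edge:
  assumes "R\<^sup>*\<^sup>* x y" "x \<in> S" "y \<notin> S"
  obtains s t where "s \<in> S" "t \<notin> S" "R s t"
proof -
  from assms have "\<exists>s t. s \<in> S \<and> t \<notin> S \<and> R s t"
    by (induction rule: rtranclp_induct) blast+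
  with that show ?thesis by blast
qed

lemma gamma_t2_le_card: "semitotal_dom V E D \<Longrightarrow> gamma_t2 V E \<le> card D"
  unfolding gamma_t2_def by (rule Least_le) blast

lemma min_sds_exists: "semitotal_dom V E D \<Longrightarrow> \<exists>D'. min_sds V E D'"
  unfolding min_sds_def gamma_t2_def by (rule LeastI_ex) blast

lemma min_sds_if_card_le: "semitotal_dom V E D \<Longrightarrow> card D \<le> gamma_t2 V E \<Longrightarrow> min_sds V E D"
  unfolding min_sds_def using gamma_t2_le_card le_antisym by blast

lemma card_exchange: "finite A \<Longrightarrow> x \<in> A \<Longrightarrow> y \<notin> A \<Longrightarrow> card (insert y (A - {x})) = card A"
  using card_Suc_Diff1[of A x] by simp

lemma connected_graph_semitotal_dom_vertex_set:
  assumes conn: "connected_graph V E" and two: "2 \<le> card V"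
  shows "semitotal_dom V E V"
  unfolding semitotal_dom_def
proof (intro conjI ballI)
  fix x assume x: "x \<in> V"
  have g: "graph V E" using conn unfolding connected_graph_def by blast
  have "\<not> V \<subseteq> {x}"
  proof
    assume "V \<subseteq> {x}"
    then have "card V \<le> 1" using card_mono[of "{x}" V] by simp
    with two show False by simp
  qed
  then obtain y where y: "y \<in> V" "y \<noteq> x" by blast
  have "E\<^sup>*\<^sup>* x y" using conn x y(1) unfolding connected_graph_def by blast
  then obtain t where "E x t"
    using rtranclp_boundary_edge[of E x y "{x}"] y(2) by blast
  then show "\<exists>t\<in>V. within_two V E x t"
    using graph_vertices[OF g] within_two_if_edge[OF g] by blast
qed auto

definition contract_map :: "'a \<Rightarrow> 'a \<Rightarrow> 'a \<Rightarrow> 'a" where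
  "contract_map u v x = (if x = v then u else x)"

lemma contract_E_contract_map:
  assumes g: "graph V E" and uv: "E u v" and xy: "E x y"
  shows "contract_map u v x = contract_map u v y
    \<or> contract_E V E u v (contract_map u v x) (contract_map u v y)"
  using graph_vertices[OF g uv] graph_vertices[OF g xy] graph_irrefl[OF g] uv xy
  unfolding contract_map_def contract_E_def by auto

lemma within_two_contract_map:
  assumes g: "graph V E" and uv: "E u v" and xy: "within_two V E x y"
    and ne: "contract_map u v x \<noteq> contract_map u v y"
  shows "within_two (V - {v}) (contract_E V E u v) (contract_map u v x) (contract_map u v y)"
proof -
  have mem: "contract_map u v w \<in> V - {v}" if "w \<in> V" for w
    using that graph_vertices[OF g uv] graph_irrefl[OF g uv] unfolding contract_map_def by auto
  from xy consider "E x y" | w where "w \<in> V" "E x w" "E w y"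
    unfolding within_two_def by blast
  then show ?thesis
  proof cases
    case 1
    then show ?thesis using contract_E_contract_map[OF g uv] ne unfolding within_two_def by blast
  next
    case (2 w)
    then show ?thesis
      using contract_E_contract_map[OF g uv 2(2)] contract_E_contract_map[OF g uv 2(3)] ne mem
      unfolding within_two_def by metis
  qed
qed

lemma graph_contract:
  assumes g: "graph V E" and uv: "E u v"
  shows "graph (V - {v}) (contract_E V E u v)"
  using g graph_vertices[OF g uv] graph_irrefl[OF g uv] graph_sym[OF g]
  unfolding graph_def contract_E_def by blast

lemma rtranclp_contract_map:
  assumes g: "graph V E" and uv: "E u v" and "E\<^sup>*\<^sup>* x y"
  shows "(contract_E V E u v)\<^sup>*\<^sup>* (contract_map u v x) (contract_map u v y)"
  using assms(3)
proof (induction rule: rtranclp_induct)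
  case (step y z)
  then show ?case
    using contract_E_contract_map[OF g uv step(2)] by (metis rtranclp.rtrancl_into_rtrancl)
qed simp

lemma connected_graph_contract:
  assumes conn: "connected_graph V E" and uv: "E u v"
  shows "connected_graph (V - {v}) (contract_E V E u v)"
proof -
  have g: "graph V E" using conn unfolding connected_graph_def by blast
  have "(contract_E V E u v)\<^sup>*\<^sup>* x y" if "x \<in> V - {v}" "y \<in> V - {v}" for x y
    using rtranclp_contract_map[OF g uv, of x y] conn that
    unfolding connected_graph_def contract_map_def by auto
  then show ?thesis using graph_contract[OF g uv] unfolding connected_graph_def by blast
qed

lemma contract_E_lift: "contract_E V E u v x y \<Longrightarrow> x \<noteq> u \<Longrightarrow> E x y \<or> (y = u \<and> E x v)"
  unfolding contract_E_def by blast

lemma within_two_contract_lift: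
  assumes "within_two (V - {v}) (contract_E V E u v) x y" "x \<noteq> u"
  shows "within_two V E x y \<or> E x u \<or> E x v \<or> (y = u \<and> within_two V E x v)"
  using assms unfolding within_two_def contract_E_def by blast

lemma semitotal_dom_uncontract_in:
  assumes g: "graph V E" and uv: "E u v"
    and sd: "semitotal_dom (V - {v}) (contract_E V E u v) D'" and uD: "u \<in> D'"
  shows "semitotal_dom V E (insert v D')"
  unfolding semitotal_dom_def
proof (intro conjI ballI)
  show "insert v D' \<subseteq> V" using sd graph_vertices[OF g uv] unfolding semitotal_dom_def by blast
next
  fix x assume x: "x \<in> V - insert v D'"
  then obtain d where "d \<in> D'" "contract_E V E u v x d" using sd unfolding semitotal_dom_def by blast
  then show "\<exists>y\<in>insert v D'. E x y" using contract_E_lift[of V E u v x d] x uD by blast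
next
  fix x assume x: "x \<in> insert v D'"
  show "\<exists>y\<in>insert v D'. within_two V E x y"
  proof (cases "x = u \<or> x = v")
    case True
    then show ?thesis using uD within_two_if_edge[OF g uv] within_two_if_edge[OF g graph_sym[OF g uv]] by blast
  next
    case False
    with x obtain y where "y \<in> D'" "within_two (V - {v}) (contract_E V E u v) x y"
      using sd unfolding semitotal_dom_def by blast
    then show ?thesis
      using within_two_contract_lift[of V v E u x y] False uD within_two_if_edge[OF g] by blast
  qed
qed

lemma semitotal_dom_uncontract_notin:
  assumes g: "graph V E" and uv: "E u v"
    and sd: "semitotal_dom (V - {v}) (contract_E V E u v) D'" and uD: "u \<notin> D'"
    and c: "c \<in> {u, v}" and d: "d \<in> D'" "E c d"
  shows "semitotal_dom V E (insert c D')"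
proof -
  have D'V: "D' \<subseteq> V - {v}" using sd unfolding semitotal_dom_def by blast
  have uv_adj: "E x c" if "x \<in> {u, v}" "x \<noteq> c" for x
    using that c uv graph_sym[OF g uv] by blast
  have near_c: "within_two V E x c" if "E x u \<or> E x v" "x \<notin> {u, v}" for x
    using that uv_adj graph_vertices[OF g uv] c within_two_if_edge[OF g] unfolding within_two_def
    by blast
  show ?thesis
    unfolding semitotal_dom_def
  proof (intro conjI ballI)
    show "insert c D' \<subseteq> V" using D'V c graph_vertices[OF g uv] by blast
  next
    fix x assume x: "x \<in> V - insert c D'"
    show "\<exists>y\<in>insert c D'. E x y"
    proof (cases "x \<in> {u, v}")
      case True
      then show ?thesis using uv_adj x by blast
    next
      case False
      then obtain d' where "d' \<in> D'" "contract_E V E u v x d'"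
        using sd x unfolding semitotal_dom_def by blast
      then show ?thesis using contract_E_lift[of V E u v x d'] False uD by blast
    qed
  next
    fix x assume x: "x \<in> insert c D'"
    show "\<exists>y\<in>insert c D'. within_two V E x y"
    proof (cases "x = c")
      case True
      then show ?thesis using d within_two_if_edge[OF g] by blast
    next
      case False
      then have "x \<in> D'" "x \<notin> {u, v}" using x D'V uD by auto
      then obtain y where "y \<in> D'" "within_two (V - {v}) (contract_E V E u v) x y"
        using sd unfolding semitotal_dom_def by blast
      then show ?thesis
        using within_two_contract_lift[of V v E u x y] \<open>x \<notin> {u, v}\<close> uD near_c by blast
    qed
  qed
qed

lemma uncontract_semitotal_dom:
  assumes g: "graph V E" and uv: "E u v"
    and sd: "semitotal_dom (V - {v}) (contract_E V E u v) D'"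
  obtains D where "semitotal_dom V E D" "card D \<le> Suc (card D')" "\<not> independent E D"
proof -
  have card: "card (insert x D') \<le> Suc (card D')" for x
    by (cases "finite D'") (auto simp: card_insert_if)
  show thesis
  proof (cases "u \<in> D'")
    case True
    have "\<not> independent E (insert v D')" using uv True unfolding independent_def by blast
    then show thesis using that[OF semitotal_dom_uncontract_in[OF g uv sd True] card] by blast
  next
    case False
    have "u \<in> V - {v}" using graph_vertices[OF g uv] graph_irrefl[OF g uv] by blast
    then obtain d where d: "d \<in> D'" "contract_E V E u v u d"
      using sd False unfolding semitotal_dom_def by blast
    then obtain c where c: "c \<in> {u, v}" "E c d" using False unfolding contract_E_def by blast
    have "\<not> independent E (insert c D')" using c d unfolding independent_def by blast
    then show thesis
      using that[OF semitotal_dom_uncontract_notin[OF g uv sd False c(1) d(1) c(2)] card] by blast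
  qed
qed

lemma min_sds_not_independent_if_ct:
  assumes conn: "connected_graph V E" and three: "3 \<le> gamma_t2 V E" and ct: "ct_gamma_t2_le_1 V E"
  shows "\<exists>D. min_sds V E D \<and> \<not> independent E D"
proof -
  have g: "graph V E" using conn unfolding connected_graph_def by blast
  obtain u v where uV: "u \<in> V" "v \<in> V" and uv: "E u v"
    and less: "gamma_t2 (V - {v}) (contract_E V E u v) < gamma_t2 V E"
    using ct unfolding ct_gamma_t2_le_1_def contract_V_def by blast
  have "card {u, v} = 2" using graph_irrefl[OF g uv] by simp
  then have "2 \<le> card V" using card_mono[OF graph_finite[OF g], of "{u, v}"] uV by simp
  then have "gamma_t2 V E \<le> card V"
    using gamma_t2_le_card connected_graph_semitotal_dom_vertex_set[OF conn] by blast
  then have "2 \<le> card (V - {v})" using three uV(2) graph_finite[OF g] by simp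
  then obtain D' where D': "min_sds (V - {v}) (contract_E V E u v) D'"
    using min_sds_exists connected_graph_semitotal_dom_vertex_set[OF connected_graph_contract[OF conn uv]]
    by blast
  then obtain D where "semitotal_dom V E D" "card D \<le> Suc (card D')" "\<not> independent E D"
    using uncontract_semitotal_dom[OF g uv] unfolding min_sds_def by blast
  moreover have "card D \<le> gamma_t2 V E" using calculation(2) less D' unfolding min_sds_def by simp
  ultimately show ?thesis using min_sds_if_card_le by blast
qed

definition edge_near_third :: "'a set \<Rightarrow> ('a \<Rightarrow> 'a \<Rightarrow> bool) \<Rightarrow> 'a set \<Rightarrow> bool" where
  "edge_near_third V E D \<longleftrightarrow> (\<exists>u\<in>D. \<exists>v\<in>D. \<exists>c\<in>D - {u, v}.
     E u v \<and> (within_two V E u c \<or> within_two V E v c))"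

lemma semitotal_dom_contract_edge_near_third:
  assumes g: "graph V E" and sd: "semitotal_dom V E D"
    and uD: "u \<in> D" and vD: "v \<in> D" and uv: "E u v"
    and cD: "c \<in> D - {u, v}" and near: "within_two V E u c \<or> within_two V E v c"
  shows "semitotal_dom (V - {v}) (contract_E V E u v) (D - {v})"
proof -
  let ?f = "contract_map u v"
  have u_ne_v: "u \<noteq> v" using graph_irrefl[OF g uv] .
  have f_in_D: "?f x \<in> D - {v}" if "x \<in> D" for x
    using that uD u_ne_v unfolding contract_map_def by auto
  have f_id: "?f x = x" if "x \<noteq> v" for x
    using that unfolding contract_map_def by simp
  show ?thesis
    unfolding semitotal_dom_def
  proof (intro conjI ballI)
    show "D - {v} \<subseteq> V - {v}" using sd unfolding semitotal_dom_def by blast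
  next
    fix x assume x: "x \<in> V - {v} - (D - {v})"
    then obtain d where d: "d \<in> D" "E x d" using sd unfolding semitotal_dom_def by blast
    have "?f x \<noteq> ?f d" using f_in_D[OF d(1)] f_id x by auto
    then have "contract_E V E u v x (?f d)"
      using contract_E_contract_map[OF g uv d(2)] f_id x by auto
    then show "\<exists>y\<in>D - {v}. contract_E V E u v x y" using f_in_D[OF d(1)] by blast
  next
    fix x assume x: "x \<in> D - {v}"
    show "\<exists>y\<in>D - {v}. within_two (V - {v}) (contract_E V E u v) x y"
    proof (cases "x = u")
      case True
      have "?f u = u" "?f v = u" "?f c = c" "c \<noteq> u"
        using cD f_id u_ne_v unfolding contract_map_def by auto
      then have "within_two (V - {v}) (contract_E V E u v) u c"
        using near within_two_contract_map[OF g uv, of u c] within_two_contract_map[OF g uv, of v c] by metis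
      then show ?thesis using True cD by blast
    next
      case False
      obtain y where y: "y \<in> D" "within_two V E x y" using sd x unfolding semitotal_dom_def by blast
      have "x \<noteq> y" using y(2) unfolding within_two_def by blast
      then have "?f x \<noteq> ?f y" using False f_id x unfolding contract_map_def by auto
      then show ?thesis
        using within_two_contract_map[OF g uv y(2)] f_in_D[OF y(1)] f_id x by auto
    qed
  qed
qed

lemma ct_if_edge_near_third:
  assumes g: "graph V E" and D: "min_sds V E D" and near: "edge_near_third V E D"
  shows "ct_gamma_t2_le_1 V E"
proof -
  obtain u v c where uv: "u \<in> D" "v \<in> D" "E u v" and c: "c \<in> D - {u, v}"
    and uvc: "within_two V E u c \<or> within_two V E v c"
    using near unfolding edge_near_third_def by blast
  have sd: "semitotal_dom V E D" using D unfolding min_sds_def by blast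
  have "finite D" using sd graph_finite[OF g] finite_subset unfolding semitotal_dom_def by blast
  have "gamma_t2 (V - {v}) (contract_E V E u v) \<le> card (D - {v})"
    by (rule gamma_t2_le_card[OF semitotal_dom_contract_edge_near_third[OF g sd uv c uvc]])
  also have "\<dots> < card D" using \<open>finite D\<close> uv(2) by (rule card_Diff1_less)
  also have "\<dots> = gamma_t2 V E" using D unfolding min_sds_def by blast
  finally show ?thesis
    using uv graph_vertices[OF g] unfolding ct_gamma_t2_le_1_def contract_V_def by blast
qed

lemma semitotal_dom_exchange:
  assumes sd: "semitotal_dom V E D" and D'V: "D' \<subseteq> V" and kept: "D - {x} \<subseteq> D'"
    and dom: "\<And>w. w \<in> V - D' \<Longrightarrow> w = x \<or> E w x \<Longrightarrow> \<exists>y\<in>D'. E w y"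
    and partner: "\<And>y. y \<in> D' \<Longrightarrow> \<exists>z\<in>D'. within_two V E y z"
  shows "semitotal_dom V E D'"
  unfolding semitotal_dom_def
proof (intro conjI ballI)
  fix w assume w: "w \<in> V - D'"
  show "\<exists>y\<in>D'. E w y"
  proof (cases "w = x \<or> E w x")
    case True
    then show ?thesis using dom w by blast
  next
    case False
    then have "w \<in> V - D" using w kept by blast
    then obtain d where "d \<in> D" "E w d" using sd unfolding semitotal_dom_def by blast
    then show ?thesis using False kept by blast
  qed
qed (use D'V partner in blast)+

lemma free_2P3_forced_edge:
  assumes free: "free_2P3 V E"
    and in_V: "{a1, b1, c1, a2, b2, c2} \<subseteq> V" and dist: "distinct [a1, b1, c1, a2, b2, c2]"
    and P1: "induced_P3 E a1 b1 c1" and P2: "induced_P3 E a2 b2 c2"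
    and only: "\<And>x y. x \<in> {a1, b1, c1} \<Longrightarrow> y \<in> {a2, b2, c2} \<Longrightarrow> E x y \<Longrightarrow> x = a1 \<and> y = t"
  shows "E a1 t"
proof (rule ccontr)
  assume "\<not> E a1 t"
  with only have "\<forall>x\<in>{a1, b1, c1}. \<forall>y\<in>{a2, b2, c2}. \<not> E x y" by blast
  moreover have "a1 \<in> V" "b1 \<in> V" "c1 \<in> V" "a2 \<in> V" "b2 \<in> V" "c2 \<in> V" using in_V by auto
  ultimately show False using dist P1 P2 free unfolding free_2P3_def by blast
qed

locale separated_edge =
  fixes V :: "'a set" and E :: "'a \<Rightarrow> 'a \<Rightarrow> bool" and D :: "'a set" and u v :: 'a
  assumes graph: "graph V E" and sd: "semitotal_dom V E D"
    and uD: "u \<in> D" and vD: "v \<in> D" and uv: "E u v"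
    and separated: "\<And>r x. r \<in> D - {u, v} \<Longrightarrow> x \<in> {u, v} \<Longrightarrow> \<not> within_two V E x r"
begin

lemma u_neq_v: "u \<noteq> v"
  using graph_irrefl[OF graph uv] .

lemma vu: "E v u"
  using graph_sym[OF graph uv] .

lemma sym: "E x y \<Longrightarrow> E y x"
  using graph_sym[OF graph] .

lemma D_subset: "D \<subseteq> V"
  using sd unfolding semitotal_dom_def by blast

lemma finite_D: "finite D"
  using D_subset graph_finite[OF graph] by (rule finite_subset)

lemma outer_neighbour:
  assumes r: "r \<in> D - {u, v}" and wr: "E w r"
  shows "w \<notin> {u, v}" "\<not> E w u" "\<not> E w v"
proof -
  have "\<not> within_two V E u r" "\<not> within_two V E v r" using separated[OF r] by blast+
  then show "w \<notin> {u, v}" "\<not> E w u" "\<not> E w v"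
    using r wr sym graph_vertices[OF graph wr] within_two_if_edge[OF graph, of _ r]
    unfolding within_two_def by blast+
qed

lemma outer_partner:
  assumes r: "r \<in> D - {u, v}"
  obtains y where "y \<in> D - {u, v}" "within_two V E r y"
proof -
  obtain y where "y \<in> D" "within_two V E r y" using sd r unfolding semitotal_dom_def by blast
  moreover have "y \<notin> {u, v}" using separated[OF r] within_two_sym[OF graph] calculation(2) by blast
  ultimately show thesis using that by blast
qed

lemma boundary_edge:
  assumes conn: "connected_graph V E" and outer: "D - {u, v} \<noteq> {}"
  obtains p q z where "E p u \<or> E p v" "p \<notin> {u, v}" "E p q"
    "q \<in> V - D" "E q z" "z \<in> D - {u, v}"
proof -
  let ?N = "{x. x = u \<or> x = v \<or> E x u \<or> E x v}"
  obtain r where r: "r \<in> D - {u, v}" using outer by blast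
  have "r \<notin> ?N" using outer_neighbour[OF r, of u] outer_neighbour[OF r, of v] r sym by blast
  moreover have "E\<^sup>*\<^sup>* u r" using conn uD r D_subset unfolding connected_graph_def by blast
  ultimately obtain p q where p: "p \<in> ?N" and q: "q \<notin> ?N" and pq: "E p q"
    using rtranclp_boundary_edge[of E u r ?N] by blast
  have p_far: "p \<notin> {u, v}" using q pq sym by blast
  have qV: "q \<in> V" using graph_vertices[OF graph pq] by blast
  have qD: "q \<notin> D" using outer_neighbour(2,3)[of q p] p p_far q pq sym by blast
  then obtain z where z: "z \<in> D" "E q z" using sd qV unfolding semitotal_dom_def by blast
  have "z \<notin> {u, v}" using z q by blast
  then show thesis using that p p_far pq qV qD z by blast
qed

definition outer_P3_vertex :: "'a \<Rightarrow> bool" where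
  "outer_P3_vertex t \<longleftrightarrow> (\<exists>s1 s2 s3. induced_P3 E s1 s2 s3 \<and> t \<in> {s1, s2, s3}
     \<and> {s1, s2, s3} - {t} \<subseteq> D - {u, v})"

lemma outer_P3_vertexE:
  assumes "outer_P3_vertex t"
  obtains s where "s \<in> D - {u, v}" "E t s"
  using assms sym unfolding outer_P3_vertex_def induced_P3_def by auto

lemma outer_P3_vertex_adjacent:
  assumes free: "free_2P3 V E" and t: "outer_P3_vertex t"
    and x: "{x, x'} = {u, v}" and y: "E y x" "y \<noteq> x'" "\<not> E y x'"
  shows "E y t"
proof -
  obtain s1 s2 s3 where P: "induced_P3 E s1 s2 s3" and t_in: "t \<in> {s1, s2, s3}"
    and outer: "{s1, s2, s3} - {t} \<subseteq> D - {u, v}"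
    using t unfolding outer_P3_vertex_def by blast
  obtain s where "s \<in> D - {u, v}" "E t s" using outer_P3_vertexE[OF t] .
  then have t_far: "t \<notin> {u, v}" "\<not> E t u" "\<not> E t v" using outer_neighbour by blast+
  have far: "s' \<notin> {u, v} \<and> \<not> E s' u \<and> \<not> E s' v" if "s' \<in> {s1, s2, s3}" for s'
  proof (cases "s' = t")
    case False
    then have "s' \<in> D - {u, v}" using that outer by blast
    then show ?thesis using outer_neighbour[of s' u] outer_neighbour[of s' v] uv vu sym by blast
  qed (use t_far in blast)
  have x_ne: "x \<noteq> x'" using x u_neq_v by (metis doubleton_eq_iff)
  have xx': "E x x'" using x uv vu x_ne by (metis doubleton_eq_iff)
  have xs: "x \<in> {u, v}" "x' \<in> {u, v}" using x by blast+
  have y_notin: "y \<notin> {s1, s2, s3}" using far xs y(1) by blast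
  have x_notin: "x \<notin> {s1, s2, s3}" "x' \<notin> {s1, s2, s3}" using far xs by blast+
  show ?thesis
  proof (rule free_2P3_forced_edge[OF free _ _ _ P])
    have "s1 \<in> V" "s2 \<in> V" "s3 \<in> V"
      using P graph_vertices[OF graph] unfolding induced_P3_def by blast+
    then show "{y, x, x', s1, s2, s3} \<subseteq> V"
      using graph_vertices[OF graph y(1)] graph_vertices[OF graph xx'] by blast
    show "distinct [y, x, x', s1, s2, s3]"
      using P y_notin x_notin x_ne y(2) graph_irrefl[OF graph y(1)] unfolding induced_P3_def by auto
    show "induced_P3 E y x x'"
      using y xx' x_ne graph_irrefl[OF graph y(1)] unfolding induced_P3_def by auto
  next
    fix a b assume a: "a \<in> {y, x, x'}" and b: "b \<in> {s1, s2, s3}" and ab: "E a b"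
    have "b \<notin> D - {u, v}" if "a = y" using that ab y(1) xs(1) outer_neighbour(2,3)[of b y] by blast
    then show "a = y \<and> b = t" using a b far[OF b] xs sym[OF ab] outer by blast
  qed
qed

lemma exchange_v_for_neighbour_of_u:
  assumes Nv: "\<forall>y. E y v \<longrightarrow> y = u \<or> E y u"
    and p: "E p u" "p \<noteq> v" and z: "z \<in> D - {u, v}" "within_two V E p z"
  shows "\<exists>D'. semitotal_dom V E D' \<and> card D' = card D \<and> edge_near_third V E D'"
proof -
  have p_notin: "p \<notin> D" using p outer_neighbour(1)[of p u] sym graph_irrefl[OF graph p(1)] by blast
  let ?D' = "insert p (D - {v})"
  have "semitotal_dom V E ?D'"
  proof (rule semitotal_dom_exchange[OF sd])
    show "?D' \<subseteq> V" using D_subset graph_vertices[OF graph p(1)] by blast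
    show "D - {v} \<subseteq> ?D'" by blast
  next
    fix w assume "w \<in> V - ?D'" "w = v \<or> E w v"
    then show "\<exists>y\<in>?D'. E w y" using Nv vu uD u_neq_v by blast
  next
    fix x assume x: "x \<in> ?D'"
    show "\<exists>y\<in>?D'. within_two V E x y"
    proof (cases "x \<in> {p, u}")
      case True
      then show ?thesis using uD u_neq_v p within_two_if_edge[OF graph] sym by blast
    next
      case False
      then have "x \<in> D - {u, v}" using x by blast
      then obtain y where "y \<in> D - {u, v}" "within_two V E x y" by (rule outer_partner)
      then show ?thesis by blast
    qed
  qed
  moreover have "card ?D' = card D" using card_exchange[OF finite_D vD p_notin] .
  moreover have "edge_near_third V E ?D'"
    unfolding edge_near_third_def using p z p_notin uD u_neq_v by blast
  ultimately show ?thesis by blast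
qed

lemma exchange_u_for_outer_P3_vertex:
  assumes free: "free_2P3 V E" and t: "outer_P3_vertex t"
    and y0: "E y0 v" "y0 \<noteq> u" "\<not> E y0 u"
  shows "\<exists>D'. semitotal_dom V E D' \<and> card D' = card D \<and> edge_near_third V E D'"
proof -
  obtain s where s: "s \<in> D - {u, v}" "E t s" using outer_P3_vertexE[OF t] .
  have t_far: "t \<notin> {u, v}" "\<not> E t u" "\<not> E t v" using outer_neighbour[OF s] by blast+
  have tV: "t \<in> V" using graph_vertices[OF graph s(2)] by blast
  have "E y0 t" using outer_P3_vertex_adjacent[OF free t, of v u] y0 by blast
  moreover have "y0 \<in> V" "E v y0" using graph_vertices[OF graph y0(1)] sym[OF y0(1)] by blast+
  ultimately have vt: "within_two V E v t" using t_far(1) unfolding within_two_def by blast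
  have t_notin: "t \<notin> D" using separated[of t v] vt t_far by blast
  let ?D' = "insert t (D - {u})"
  have "semitotal_dom V E ?D'"
  proof (rule semitotal_dom_exchange[OF sd])
    show "?D' \<subseteq> V" using D_subset tV by blast
    show "D - {u} \<subseteq> ?D'" by blast
  next
    fix w assume w: "w \<in> V - ?D'" "w = u \<or> E w u"
    show "\<exists>y\<in>?D'. E w y"
    proof (cases "E w v")
      case True
      then show ?thesis using vD u_neq_v by blast
    next
      case False
      then have "E w u" "w \<noteq> v" using w uv vD u_neq_v by blast+
      then have "E w t" using outer_P3_vertex_adjacent[OF free t, of u v] False by blast
      then show ?thesis by blast
    qed
  next
    fix x assume x: "x \<in> ?D'"
    show "\<exists>y\<in>?D'. within_two V E x y"
    proof (cases "x \<in> {t, v}")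
      case True
      then show ?thesis using vt within_two_sym[OF graph vt] vD u_neq_v by blast
    next
      case False
      then have "x \<in> D - {u, v}" using x by blast
      then obtain y where "y \<in> D - {u, v}" "within_two V E x y" by (rule outer_partner)
      then show ?thesis by blast
    qed
  qed
  moreover have "card ?D' = card D" using card_exchange[OF finite_D uD t_notin] .
  moreover have "edge_near_third V E ?D'"
    unfolding edge_near_third_def using s vD u_neq_v t_far within_two_sym[OF graph vt] by blast
  ultimately show ?thesis by blast
qed

lemma outer_within_two_adjacent:
  assumes none: "\<nexists>t. outer_P3_vertex t"
    and z: "z1 \<in> D - {u, v}" "z2 \<in> D - {u, v}" "within_two V E z1 z2"
  shows "E z1 z2"
proof (rule ccontr)
  assume "\<not> E z1 z2"
  then obtain m where m: "E z1 m" "E m z2" and "z1 \<noteq> z2" using z(3) unfolding within_two_def by blast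
  then have "induced_P3 E z1 m z2"
    using \<open>\<not> E z1 z2\<close> graph_irrefl[OF graph] unfolding induced_P3_def by auto
  moreover have "{z1, m, z2} - {m} \<subseteq> D - {u, v}" using z by blast
  ultimately show False using none unfolding outer_P3_vertex_def by blast
qed

lemma outer_no_private_neighbour:
  assumes none: "\<nexists>t. outer_P3_vertex t"
    and z: "z1 \<in> D - {u, v}" "z2 \<in> D - {u, v}" "E z1 z2" and w: "w \<in> V - D" "E w z1"
  shows "\<exists>d\<in>D - {z1}. E w d"
proof (rule ccontr)
  assume "\<not> ?thesis"
  then have "\<not> E w z2" using z graph_irrefl[OF graph z(3)] by blast
  then have "induced_P3 E w z1 z2"
    using w z graph_irrefl[OF graph z(3)] unfolding induced_P3_def by auto
  moreover have "{w, z1, z2} - {w} \<subseteq> D - {u, v}" using z by blast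
  ultimately show False using none unfolding outer_P3_vertex_def by blast
qed

lemma exchange_outer_partner:
  assumes none: "\<nexists>t. outer_P3_vertex t"
    and q: "q \<in> V - D" "E q z" and z: "z \<in> D - {u, v}"
    and a: "a \<in> {u, v}" "within_two V E q a"
  shows "\<exists>D'. semitotal_dom V E D' \<and> card D' = card D \<and> edge_near_third V E D'"
proof -
  obtain z' where z': "z' \<in> D - {u, v}" "within_two V E z z'" using z by (rule outer_partner)
  have zz': "E z z'" using outer_within_two_adjacent[OF none z z'] .
  have z_ne: "z \<noteq> z'" using graph_irrefl[OF graph zz'] .
  let ?D' = "insert q (D - {z'})"
  have "semitotal_dom V E ?D'"
  proof (rule semitotal_dom_exchange[OF sd])
    show "?D' \<subseteq> V" using D_subset q(1) by blast
    show "D - {z'} \<subseteq> ?D'" by blast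
  next
    fix w assume w: "w \<in> V - ?D'" "w = z' \<or> E w z'"
    show "\<exists>y\<in>?D'. E w y"
    proof (cases "w = z'")
      case True
      then show ?thesis using sym[OF zz'] z z_ne by blast
    next
      case False
      then have "w \<in> V - D" "E w z'" using w by blast+
      then show ?thesis using outer_no_private_neighbour[OF none z'(1) z sym[OF zz']] by blast
    qed
  next
    fix x assume x: "x \<in> ?D'"
    show "\<exists>y\<in>?D'. within_two V E x y"
    proof (cases "x \<in> {q, z}")
      case True
      then show ?thesis using q(2) z z_ne within_two_if_edge[OF graph] sym by blast
    next
      case False
      then have xD: "x \<in> D - {z'}" using x by blast
      then obtain y where y: "y \<in> D" "within_two V E x y" using sd unfolding semitotal_dom_def by blast
      show ?thesis
      proof (cases "y = z'")
        case True
        then have "x \<in> D - {u, v}" using separated[OF z'(1)] xD y(2) by blast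
        then have "E x z'" using outer_within_two_adjacent[OF none _ z'(1)] y(2) True by blast
        then have "within_two V E x z"
          using sym[OF zz'] False graph_vertices[OF graph zz'] unfolding within_two_def by blast
        then show ?thesis using z z_ne by blast
      qed (use y in blast)
    qed
  qed
  moreover have "card ?D' = card D" using card_exchange[OF finite_D _ ] z'(1) q(1) by blast
  moreover have "edge_near_third V E ?D'"
    unfolding edge_near_third_def using q a z z' z_ne uD vD by blast
  ultimately show ?thesis by blast
qed

lemma exchange_to_edge_near_third:
  assumes conn: "connected_graph V E" and free: "free_2P3 V E" and outer: "D - {u, v} \<noteq> {}"
  shows "\<exists>D'. semitotal_dom V E D' \<and> card D' = card D \<and> edge_near_third V E D'"
proof -
  obtain p q z where p: "E p u \<or> E p v" "p \<notin> {u, v}" and pq: "E p q"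
    and q: "q \<in> V - D" "E q z" and z: "z \<in> D - {u, v}"
    using boundary_edge[OF conn outer] by blast
  show ?thesis
  proof (cases "\<forall>y. E y v \<longrightarrow> y = u \<or> E y u")
    case True
    have "p \<noteq> z" using p(1) outer_neighbour(1)[OF z] sym by blast
    then have "within_two V E p z" using pq q graph_vertices[OF graph pq] unfolding within_two_def by blast
    then show ?thesis using exchange_v_for_neighbour_of_u[OF True _ _ z] True p by blast
  next
    case False
    then obtain y0 where y0: "E y0 v" "y0 \<noteq> u" "\<not> E y0 u" by blast
    show ?thesis
    proof (cases "\<exists>t. outer_P3_vertex t")
      case True
      then show ?thesis using exchange_u_for_outer_P3_vertex[OF free _ y0] by blast
    next
      case False
      obtain a where a: "a \<in> {u, v}" "E p a" using p(1) by blast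
      then have "q \<noteq> a" using q(1) uD vD by blast
      then have "within_two V E q a"
        using a pq sym graph_vertices[OF graph pq] unfolding within_two_def by blast
      then show ?thesis using exchange_outer_partner[OF False q z a(1)] by blast
    qed
  qed
qed

end

lemma ct_if_min_sds_not_independent:
  assumes conn: "connected_graph V E" and free: "free_2P3 V E" and three: "3 \<le> gamma_t2 V E"
    and D: "min_sds V E D" and uv: "u \<in> D" "v \<in> D" "E u v"
  shows "ct_gamma_t2_le_1 V E"
proof (cases "edge_near_third V E D")
  case True
  with conn D show ?thesis using ct_if_edge_near_third unfolding connected_graph_def by blast
next
  case False
  have g: "graph V E" using conn unfolding connected_graph_def by blast
  with False have sep: "separated_edge V E D u v"
    using D uv within_two_sym[OF g] unfolding separated_edge_def min_sds_def edge_near_third_def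
    by blast
  have outer: "D - {u, v} \<noteq> {}"
  proof
    assume "D - {u, v} = {}"
    then have "card D \<le> card {u, v}" using card_mono[of "{u, v}" D] by blast
    also have "\<dots> \<le> 2" by (simp add: card_insert_le_m1)
    finally show False using D three unfolding min_sds_def by simp
  qed
  obtain D' where "semitotal_dom V E D'" "card D' = card D" "edge_near_third V E D'"
    using separated_edge.exchange_to_edge_near_third[OF sep conn free outer] by blast
  then show ?thesis using ct_if_edge_near_third[OF g] D unfolding min_sds_def by auto
qed

theorem lemma18:
  fixes V :: "'a set" and E :: "'a \<Rightarrow> 'a \<Rightarrow> bool"
  assumes "connected_graph V E"
    and "free_2P3 V E"
    and "gamma_t2 V E \<ge> 3"
  shows "ct_gamma_t2_le_1 V E \<longleftrightarrow> (\<exists>D. min_sds V E D \<and> \<not> independent E D)"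
proof
  assume "ct_gamma_t2_le_1 V E"
  then show "\<exists>D. min_sds V E D \<and> \<not> independent E D"
    using min_sds_not_independent_if_ct assms(1,3) by blast
next
  assume "\<exists>D. min_sds V E D \<and> \<not> independent E D"
  then obtain D u v where "min_sds V E D" "u \<in> D" "v \<in> D" "E u v"
    unfolding independent_def by blast
  then show "ct_gamma_t2_le_1 V E"
    using ct_if_min_sds_not_independent[OF assms(1,2)] assms(3) by simp
qed

end
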